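(* Let $V$ be a finite set, $s,t\in V$, $d$ an $st$-separating semi-metric on $V$, and $A\subseteq V$ nonempty. Define $f_A^{\pm}:V\to\mathbb R^2$ by $f_A^{\pm}(v)=(f_A^{+}(v),f_A^{-}(v))$ where $f_A^{\sigma}(v)=\tfrac12\left[d(v,s)+\sigma\, d(v,A)\right]$ for $\sigma\in\{+1,-1\}$ and $d(v,A)=\min_{a\in A}d(v,a)$. Then $f_A^{\pm}$ is $st$-sandwiching, i.e. for each $\sigma\in\{+1,-1\}$ and every $v\in V$, $f_A^{\sigma}(s)\le f_A^{\sigma}(v)\le f_A^{\sigma}(t)$.
   Context: A semi-metric on $V$ is a symmetric map $d:V\times V\to\mathbb R_{\ge0}$ with $d(v,v)=0$ satisfying the triangle inequality; it is $st$-separating if $d(s,t)=d(s,v)+d(v,t)$ for all $v\in V$. *)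

theory Defs
  imports Main "HOL.Real"
begin

definition semimetric_on :: "'a set \<Rightarrow> ('a \<Rightarrow> 'a \<Rightarrow> real) \<Rightarrow> bool" where
  "semimetric_on V d \<longleftrightarrow>
     (\<forall>u\<in>V. \<forall>v\<in>V. d u v \<ge> 0) \<and>
     (\<forall>u\<in>V. \<forall>v\<in>V. d u v = d v u) \<and>
     (\<forall>v\<in>V. d v v = 0) \<and>
     (\<forall>u\<in>V. \<forall>v\<in>V. \<forall>w\<in>V. d u w \<le> d u v + d v w)"

definition st_separating :: "'a set \<Rightarrow> ('a \<Rightarrow> 'a \<Rightarrow> real) \<Rightarrow> 'a \<Rightarrow> 'a \<Rightarrow> bool" where
  "st_separating V d s t \<longleftrightarrow> (\<forall>v\<in>V. d s t = d s v + d v t)"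

definition dist_to_set :: "('a \<Rightarrow> 'a \<Rightarrow> real) \<Rightarrow> 'a \<Rightarrow> 'a set \<Rightarrow> real" where
  "dist_to_set d v A = Min ((\<lambda>a. d v a) ` A)"

definition f_sigma :: "('a \<Rightarrow> 'a \<Rightarrow> real) \<Rightarrow> 'a \<Rightarrow> 'a set \<Rightarrow> real \<Rightarrow> 'a \<Rightarrow> real" where
  "f_sigma d s A \<sigma> v = (d v s + \<sigma> * dist_to_set d v A) / 2"

definition f_pm :: "('a \<Rightarrow> 'a \<Rightarrow> real) \<Rightarrow> 'a \<Rightarrow> 'a set \<Rightarrow> 'a \<Rightarrow> real \<times> real" where
  "f_pm d s A v = (f_sigma d s A 1 v, f_sigma d s A (-1) v)"

definition st_sandwiching :: "'a set \<Rightarrow> 'a \<Rightarrow> 'a \<Rightarrow> ('a \<Rightarrow> real \<times> real) \<Rightarrow> bool" where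
  "st_sandwiching V s t f \<longleftrightarrow>
     (\<forall>v\<in>V. fst (f s) \<le> fst (f v) \<and> fst (f v) \<le> fst (f t)) \<and>
     (\<forall>v\<in>V. snd (f s) \<le> snd (f v) \<and> snd (f v) \<le> snd (f t))"

end

theory Submission
  imports Defs
begin

text \<open>The distance to A is 1-Lipschitz, so along a shortest s-t route (which is what
  st-separation provides through every vertex) the term d(v,s) grows at least as fast as
  \<open>\<plusminus>d(v,A)\<close> can change; hence both \<open>f\<^sup>\<plusminus>\<close> coordinates increase from s via v to t.\<close>

lemma dist_to_set_le_add:
  assumes "finite A" "A \<noteq> {}" "A \<subseteq> V" "semimetric_on V d" "u \<in> V" "v \<in> V"
  shows "dist_to_set d v A \<le> d v u + dist_to_set d u A"
proof -
  have "dist_to_set d u A \<in> (\<lambda>a. d u a) ` A"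
    unfolding dist_to_set_def using assms(1,2) by (intro Min_in) auto
  then obtain a where a: "a \<in> A" "dist_to_set d u A = d u a" by auto
  have "dist_to_set d v A \<le> d v a"
    unfolding dist_to_set_def using assms(1) a(1) by (intro Min_le) auto
  also have "\<dots> \<le> d v u + d u a"
    using assms(3-6) a(1) unfolding semimetric_on_def by blast
  finally show ?thesis using a(2) by simp
qed

lemma dist_to_set_lipschitz:
  assumes "finite A" "A \<noteq> {}" "A \<subseteq> V" "semimetric_on V d" "u \<in> V" "v \<in> V"
  shows "\<bar>dist_to_set d u A - dist_to_set d v A\<bar> \<le> d u v"
proof -
  have "d v u = d u v" using assms(4-6) unfolding semimetric_on_def by blast
  then show ?thesis
    using dist_to_set_le_add[OF assms] dist_to_set_le_add[OF assms(1-4,6,5)] by linarith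
qed

lemma f_sigma_mono_along_geodesic:
  assumes "finite A" "A \<noteq> {}" "A \<subseteq> V" "semimetric_on V d" "u \<in> V" "v \<in> V"
    and "\<bar>\<sigma>\<bar> \<le> 1" and geodesic: "d u s = d v s + d v u"
  shows "f_sigma d s A \<sigma> v \<le> f_sigma d s A \<sigma> u"
proof -
  let ?\<delta> = "dist_to_set d u A - dist_to_set d v A"
  have "\<bar>\<sigma> * ?\<delta>\<bar> \<le> \<bar>?\<delta>\<bar>"
    unfolding abs_mult using assms(7) by (simp add: mult_left_le_one_le)
  also have "\<dots> \<le> d u v"
    using dist_to_set_lipschitz[OF assms(1-6)] .
  finally have "\<bar>\<sigma> * ?\<delta>\<bar> \<le> d u v" .
  moreover have "d v u = d u v" using assms(4-6) unfolding semimetric_on_def by blast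
  ultimately show ?thesis
    unfolding f_sigma_def using geodesic by (simp add: divide_right_mono algebra_simps abs_le_iff)
qed

theorem proposition2p10:
  fixes V :: "'a set" and d :: "'a \<Rightarrow> 'a \<Rightarrow> real" and s t :: 'a and A :: "'a set"
  assumes "finite V" and "s \<in> V" and "t \<in> V"
    and "semimetric_on V d" and "st_separating V d s t"
    and "A \<subseteq> V" and "A \<noteq> {}"
  shows "st_sandwiching V s t (f_pm d s A)"
proof -
  have fin: "finite A" using assms(1,6) finite_subset by blast
  have "f_sigma d s A \<sigma> s \<le> f_sigma d s A \<sigma> v \<and> f_sigma d s A \<sigma> v \<le> f_sigma d s A \<sigma> t"
    if "v \<in> V" "\<bar>\<sigma>\<bar> \<le> 1" for v \<sigma>
  proof
    have "d s s = 0" "d v s = d s v" "d t s = d s t" "d s t = d s v + d v t"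
      using assms(2-5) that(1) unfolding semimetric_on_def st_separating_def by blast+
    then show "f_sigma d s A \<sigma> s \<le> f_sigma d s A \<sigma> v"
      and "f_sigma d s A \<sigma> v \<le> f_sigma d s A \<sigma> t"
      using f_sigma_mono_along_geodesic[OF fin assms(7,6,4) _ _ that(2)] assms(2,3) that(1)
      by simp_all
  qed
  then show ?thesis
    unfolding st_sandwiching_def f_pm_def by simp
qed

end
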